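(* Let $C\subset\mathbb{P}^2$ be the Klein quartic and let $p_1\in C\setminus\{e_1,e_2,e_3\}$. Set $p_i=\varphi^{i-1}(p_1)$ for $i=1,\dots,7$, and suppose that the lines $\overline{p_1p_3}$ and $\overline{p_5p_7}$ meet in a point of $C$. If the lines \[L_1=\overline{p_6p_1},\ L_2=\overline{p_7p_2},\ L_3=\overline{p_1p_3},\ L_4=\overline{p_2p_4},\ L_5=\overline{p_3p_5},\ L_6=\overline{p_4p_6},\ L_7=\overline{p_5p_7}\] form a heptagon, then its adjoint quartic is $C$.
   Context: Work over $\mathbb{C}$. The Klein quartic is $C=\{x^3y+y^3z+z^3x=0\}\subset\mathbb{P}^2$. Let $e_1=[1:0:0]$, $e_2=[0:1:0]$, $e_3=[0:0:1]$. Let $\zeta$ be a primitive seventh root of unity and $\varphi\colon[x:y:z]\mapsto[\zeta^4x:\zeta^2y:\zeta z]$, an automorphism of $C$ of order $7$. $\overline{pq}$ denotes the line through $p$ and $q$. A heptagon is an ordered $7$-tuple of distinct lines in $\mathbb{P}^2$ with no three concurrent; its adjoint is the unique plane quartic through the $14$ points $L_i\cap L_j$ with $i,j$ non-consecutive modulo $7$. *)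

theory Defs
  imports Complex_Main
begin

text \<open>Homogeneous coordinates in P^2(C): nonzero triples up to nonzero scalars.
  Lines are represented dually by nonzero coefficient triples (a,b,c), the line
  a x + b y + c z = 0.\<close>

type_synonym pt = "complex \<times> complex \<times> complex"

definition nz :: "pt \<Rightarrow> bool" where
  "nz p \<longleftrightarrow> p \<noteq> (0, 0, 0)"

definition smult3 :: "complex \<Rightarrow> pt \<Rightarrow> pt" where
  "smult3 c p = (case p of (x, y, z) \<Rightarrow> (c * x, c * y, c * z))"

definition proj_eq :: "pt \<Rightarrow> pt \<Rightarrow> bool" where
  "proj_eq p q \<longleftrightarrow> nz p \<and> nz q \<and> (\<exists>c. c \<noteq> 0 \<and> q = smult3 c p)"

definition dot3 :: "pt \<Rightarrow> pt \<Rightarrow> complex" where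
  "dot3 p q = (case p of (a, b, c) \<Rightarrow> case q of (x, y, z) \<Rightarrow> a * x + b * y + c * z)"

definition cross3 :: "pt \<Rightarrow> pt \<Rightarrow> pt" where
  "cross3 p q = (case p of (a1, a2, a3) \<Rightarrow> case q of (b1, b2, b3) \<Rightarrow>
      (a2 * b3 - a3 * b2, a3 * b1 - a1 * b3, a1 * b2 - a2 * b1))"

definition det3 :: "pt \<Rightarrow> pt \<Rightarrow> pt \<Rightarrow> complex" where
  "det3 p q r = dot3 p (cross3 q r)"

definition line_through :: "pt \<Rightarrow> pt \<Rightarrow> pt" where
  "line_through p q = cross3 p q"

definition meet :: "pt \<Rightarrow> pt \<Rightarrow> pt" where
  "meet L M = cross3 L M"

definition on_line :: "pt \<Rightarrow> pt \<Rightarrow> bool" where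
  "on_line p L \<longleftrightarrow> dot3 L p = 0"

definition klein :: "pt \<Rightarrow> complex" where
  "klein p = (case p of (x, y, z) \<Rightarrow> x ^ 3 * y + y ^ 3 * z + z ^ 3 * x)"

definition on_klein :: "pt \<Rightarrow> bool" where
  "on_klein p \<longleftrightarrow> nz p \<and> klein p = 0"

definition e1 :: pt where "e1 = (1, 0, 0)"
definition e2 :: pt where "e2 = (0, 1, 0)"
definition e3 :: pt where "e3 = (0, 0, 1)"

text \<open>The order 7 automorphism, for a primitive seventh root of unity \<zeta>.\<close>
definition phi :: "complex \<Rightarrow> pt \<Rightarrow> pt" where
  "phi \<zeta> p = (case p of (x, y, z) \<Rightarrow> (\<zeta> ^ 4 * x, \<zeta> ^ 2 * y, \<zeta> * z))"

definition quartic_eval :: "(nat \<Rightarrow> nat \<Rightarrow> complex) \<Rightarrow> pt \<Rightarrow> complex" where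
  "quartic_eval Q p = (case p of (x, y, z) \<Rightarrow>
      (\<Sum>a\<le>4. \<Sum>b\<le>4 - a. Q a b * x ^ a * y ^ b * z ^ (4 - a - b)))"

definition is_quartic_form :: "(pt \<Rightarrow> complex) \<Rightarrow> bool" where
  "is_quartic_form F \<longleftrightarrow>
     (\<exists>Q. (\<exists>a b. a + b \<le> 4 \<and> Q a b \<noteq> 0) \<and> F = quartic_eval Q)"

definition heptagon :: "(nat \<Rightarrow> pt) \<Rightarrow> bool" where
  "heptagon L \<longleftrightarrow>
     (\<forall>i<7. nz (L i)) \<and>
     (\<forall>i<7. \<forall>j<7. i \<noteq> j \<longrightarrow> \<not> proj_eq (L i) (L j)) \<and>
     (\<forall>i<7. \<forall>j<7. \<forall>k<7. i \<noteq> j \<and> j \<noteq> k \<and> i \<noteq> k \<longrightarrow> det3 (L i) (L j) (L k) \<noteq> 0)"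

definition nonconsec7 :: "nat \<Rightarrow> nat \<Rightarrow> bool" where
  "nonconsec7 i j \<longleftrightarrow> i < 7 \<and> j < 7 \<and> i \<noteq> j \<and> j \<noteq> (i + 1) mod 7 \<and> i \<noteq> (j + 1) mod 7"

definition adjoint_points :: "(nat \<Rightarrow> pt) \<Rightarrow> pt set" where
  "adjoint_points L = {meet (L i) (L j) | i j. nonconsec7 i j}"

definition is_adjoint :: "(nat \<Rightarrow> pt) \<Rightarrow> (pt \<Rightarrow> complex) \<Rightarrow> bool" where
  "is_adjoint L F \<longleftrightarrow> is_quartic_form F \<and> (\<forall>q\<in>adjoint_points L. F q = 0) \<and>
     (\<forall>G. is_quartic_form G \<and> (\<forall>q\<in>adjoint_points L. G q = 0) \<longrightarrow> (\<exists>c. G = (\<lambda>p. c * F p)))"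

end

theory Submission
  imports Defs "HOL-Computational_Algebra.Polynomial"
begin

text \<open>The 14 adjoint points are the points \<open>L\<^sub>i \<inter> L\<^sub>i\<^sub>+\<^sub>2 = p\<^sub>i\<close>, which lie on \<open>C\<close>, and
  the points \<open>L\<^sub>i \<inter> L\<^sub>i\<^sub>+\<^sub>3\<close>, which form a single orbit of \<open>\<phi>\<close> (the dual action of \<open>\<phi>\<close> shifts
  the indices of the lines); as \<open>C\<close> is \<open>\<phi>\<close>-invariant and \<open>L\<^sub>3 \<inter> L\<^sub>7 \<in> C\<close> by hypothesis, the
  Klein quartic passes through all 14 points.

  Uniqueness rests on the fact that a quartic vanishing at five points of a line contains the
  line. Given a quartic \<open>G\<close> through the 14 points, subtract the multiple of the Klein form that
  also vanishes at a point of \<open>L\<^sub>1\<close> off \<open>C\<close>. The difference meets \<open>L\<^sub>1\<close> in five points, so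
  contains it; then \<open>L\<^sub>2, \<dots>, L\<^sub>5\<close> in turn, each of which meets the lines already contained and
  its non-neighbours in five distinct points; and a quartic containing five lines in general
  position vanishes identically, by restricting to a generic line. (In the formal text lines
  and points are indexed from 0.)\<close>

definition lin_comb :: "complex \<Rightarrow> pt \<Rightarrow> complex \<Rightarrow> pt \<Rightarrow> pt" where
  "lin_comb \<alpha> u \<beta> v = (case u of (u1, u2, u3) \<Rightarrow> case v of (v1, v2, v3) \<Rightarrow>
      (\<alpha> * u1 + \<beta> * v1, \<alpha> * u2 + \<beta> * v2, \<alpha> * u3 + \<beta> * v3))"

lemma smult3_eq_zero_iff: "smult3 c w = (0, 0, 0) \<longleftrightarrow> c = 0 \<or> w = (0, 0, 0)"
  by (cases w) (auto simp: smult3_def)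

lemma det3_zero_left: "det3 (0, 0, 0) a b = 0"
  by (cases a; cases b) (simp add: det3_def dot3_def cross3_def)

lemma dot3_commute: "dot3 a b = dot3 b a"
  by (cases a; cases b) (simp add: dot3_def mult.commute)

lemma dot3_smult3_right: "dot3 l (smult3 c x) = c * dot3 l x"
  by (cases l; cases x) (simp add: dot3_def smult3_def algebra_simps)

lemma dot3_cross3_left: "dot3 a (cross3 a b) = 0"
  by (cases a; cases b) (simp add: cross3_def dot3_def algebra_simps)

lemma dot3_cross3_right: "dot3 b (cross3 a b) = 0"
  by (cases a; cases b) (simp add: cross3_def dot3_def algebra_simps)

lemma on_line_cross3_left: "on_line (cross3 a b) a"
  by (simp add: on_line_def dot3_cross3_left)

lemma on_line_cross3_right: "on_line (cross3 a b) b"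
  by (simp add: on_line_def dot3_cross3_right)

lemma cross3_commute: "cross3 b a = smult3 (-1) (cross3 a b)"
  by (cases a; cases b) (simp add: cross3_def smult3_def algebra_simps)

lemma det3_eq_dot3_cross3: "det3 a b c = dot3 (cross3 a b) c"
  by (cases a; cases b; cases c) (simp add: det3_def dot3_def cross3_def algebra_simps)

lemma cross3_cross3_common_left: "cross3 (cross3 l a) (cross3 l b) = smult3 (det3 l a b) l"
  by (induct l rule: prod_induct3; induct a rule: prod_induct3; induct b rule: prod_induct3)
    (simp add: cross3_def det3_def dot3_def smult3_def, (intro conjI)?; algebra)

lemma cross3_cross3_common_middle: "cross3 (cross3 a b) (cross3 b c) = smult3 (det3 a b c) b"
  by (induct a rule: prod_induct3; induct b rule: prod_induct3; induct c rule: prod_induct3)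
    (simp add: cross3_def det3_def dot3_def smult3_def, (intro conjI)?; algebra)

lemma cross3_cross3_right: "cross3 l (cross3 p s) = lin_comb (dot3 l s) p (- dot3 l p) s"
  by (induct l rule: prod_induct3; induct p rule: prod_induct3; induct s rule: prod_induct3)
    (simp add: cross3_def dot3_def lin_comb_def, (intro conjI)?; algebra)

lemma cramer3:
  "det3 u v r = 0 \<Longrightarrow> smult3 (det3 u v w) r = lin_comb (det3 r v w) u (det3 u r w) v"
  by (induct u rule: prod_induct3; induct v rule: prod_induct3; induct w rule: prod_induct3;
      induct r rule: prod_induct3)
    (simp add: cross3_def det3_def dot3_def smult3_def lin_comb_def, (intro conjI)?; algebra)

lemma exists_dot3_nonzero:
  assumes "l \<noteq> (0, 0, 0)"
  obtains s where "dot3 l s \<noteq> 0"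
proof -
  obtain l1 l2 l3 where l: "l = (l1, l2, l3)" by (cases l)
  consider "l1 \<noteq> 0" | "l2 \<noteq> 0" | "l3 \<noteq> 0" using assms l by auto
  then show ?thesis
    by cases (use that[of "(1, 0, 0)"] that[of "(0, 1, 0)"] that[of "(0, 0, 1)"] in
      \<open>auto simp: l dot3_def\<close>)
qed

lemma cross3_eq_zero_imp_smult3:
  assumes "cross3 q w = (0, 0, 0)" "q \<noteq> (0, 0, 0)"
  obtains c where "w = smult3 c q"
proof -
  obtain s where s: "dot3 q s \<noteq> 0" using exists_dot3_nonzero[OF assms(2)] .
  have "lin_comb (dot3 s w) q (- dot3 s q) w = (0, 0, 0)"
    using cross3_cross3_right[of s q w] assms(1) by (simp add: cross3_def)
  then have "w = smult3 (dot3 s w / dot3 s q) q"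
    using s by (cases q; cases w) (auto simp: lin_comb_def smult3_def dot3_commute field_simps)
  then show ?thesis using that by blast
qed

lemma cross3_eq_smult3_if_on_lines:
  assumes "on_line q A" "on_line q B" "q \<noteq> (0, 0, 0)"
  obtains c where "cross3 A B = smult3 c q"
proof (rule cross3_eq_zero_imp_smult3[OF _ assms(3)])
  show "cross3 q (cross3 A B) = (0, 0, 0)"
    using assms(1,2) by (simp add: cross3_cross3_right on_line_def dot3_commute lin_comb_def)
qed (use that in blast)

lemma lin_comb_if_det3_eq_0:
  assumes "cross3 u v \<noteq> (0, 0, 0)" "det3 u v r = 0"
  obtains \<alpha> \<beta> where "r = lin_comb \<alpha> u \<beta> v"
proof -
  obtain w where w: "det3 u v w \<noteq> 0"
    using exists_dot3_nonzero[OF assms(1)] det3_eq_dot3_cross3 by metis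
  have "smult3 (det3 u v w) r = lin_comb (det3 r v w) u (det3 u r w) v"
    by (rule cramer3[OF assms(2)])
  then have "r = lin_comb (det3 r v w / det3 u v w) u (det3 u r w / det3 u v w) v"
    using w by (cases r; cases u; cases v) (auto simp: lin_comb_def smult3_def field_simps)
  then show ?thesis using that by blast
qed

lemma det3_eq_0_if_on_line:
  assumes "l \<noteq> (0, 0, 0)" "on_line u l" "on_line v l" "on_line r l"
  shows "det3 u v r = 0"
proof (cases "cross3 u v = (0, 0, 0)")
  case True
  then show ?thesis by (cases r) (simp add: det3_eq_dot3_cross3 dot3_def)
next
  case False
  obtain c where "cross3 u v = smult3 c l"
    using cross3_eq_smult3_if_on_lines[OF _ _ assms(1)] assms(2,3)
    by (metis on_line_def dot3_commute)
  then show ?thesis using assms(4) by (simp add: det3_eq_dot3_cross3 dot3_commute[of _ r]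
      dot3_smult3_right on_line_def)
qed

lemma lin_comb_zero_left: "lin_comb 0 u \<beta> v = smult3 \<beta> v"
  by (cases u; cases v) (simp add: lin_comb_def smult3_def)

lemma lin_comb_one_zero: "lin_comb 1 u 0 v = u"
  by (cases u; cases v) (simp add: lin_comb_def)

lemma lin_comb_normalize: "\<alpha> \<noteq> 0 \<Longrightarrow> lin_comb \<alpha> u \<beta> v = smult3 \<alpha> (lin_comb 1 u (\<beta> / \<alpha>) v)"
  by (cases u; cases v) (simp add: lin_comb_def smult3_def field_simps)

lemma cross3_lin_comb_left: "cross3 (lin_comb \<alpha> u \<beta> v) v = smult3 \<alpha> (cross3 u v)"
  by (cases u; cases v) (simp add: lin_comb_def smult3_def cross3_def algebra_simps)

lemma cross3_lin_comb_right: "cross3 (lin_comb \<alpha> u \<beta> v) u = smult3 (- \<beta>) (cross3 u v)"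
  by (cases u; cases v) (simp add: lin_comb_def smult3_def cross3_def algebra_simps)

lemma cross3_lin_comb_lin_comb:
  "cross3 (lin_comb 1 u t v) (lin_comb 1 u s v) = smult3 (s - t) (cross3 u v)"
  by (cases u; cases v) (simp add: lin_comb_def smult3_def cross3_def algebra_simps)

lemma cross3_smult3: "cross3 (smult3 a x) (smult3 b y) = smult3 (a * b) (cross3 x y)"
  by (cases x; cases y) (simp add: smult3_def cross3_def algebra_simps)

lemma quartic_eval_smult3: "quartic_eval Q (smult3 c p) = c ^ 4 * quartic_eval Q p"
proof -
  obtain x y z where p: "p = (x, y, z)" by (cases p)
  have summand: "Q a b * (c * x) ^ a * (c * y) ^ b * (c * z) ^ (4 - a - b)
      = c ^ 4 * (Q a b * x ^ a * y ^ b * z ^ (4 - a - b))" if "a + b \<le> 4" for a b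
  proof -
    have "c ^ a * c ^ b * c ^ (4 - a - b) = c ^ 4"
      using that by (simp flip: power_add)
    then show ?thesis by (simp add: power_mult_distrib mult_ac)
  qed
  have "(\<Sum>a\<le>4. \<Sum>b\<le>4 - a. Q a b * (c * x) ^ a * (c * y) ^ b * (c * z) ^ (4 - a - b))
      = (\<Sum>a\<le>4. \<Sum>b\<le>4 - a. c ^ 4 * (Q a b * x ^ a * y ^ b * z ^ (4 - a - b)))"
    by (intro sum.cong refl summand) auto
  then show ?thesis
    unfolding p smult3_def quartic_eval_def by (simp add: sum_distrib_left)
qed

lemma quartic_eval_diff:
  "quartic_eval Q p - c * quartic_eval Q' p = quartic_eval (\<lambda>a b. Q a b - c * Q' a b) p"
  by (cases p) (simp add: quartic_eval_def sum_subtractf sum_distrib_left algebra_simps)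

lemma coeff_mult_degree_bounds:
  fixes p q :: "'a::comm_semiring_0 poly"
  assumes "degree p \<le> m" "degree q \<le> n"
  shows "coeff (p * q) (m + n) = coeff p m * coeff q n"
proof -
  have "coeff (p * q) (m + n) = (\<Sum>i\<le>m + n. coeff p i * coeff q (m + n - i))"
    by (rule coeff_mult)
  also have "\<dots> = (\<Sum>i\<in>{m}. coeff p i * coeff q (m + n - i))"
  proof (rule sum.mono_neutral_right)
    show "\<forall>i\<in>{..m + n} - {m}. coeff p i * coeff q (m + n - i) = 0"
    proof
      fix i assume "i \<in> {..m + n} - {m}"
      then consider "i < m" | "m < i" "i \<le> m + n" by fastforce
      then show "coeff p i * coeff q (m + n - i) = 0"
        by cases (use assms in \<open>simp_all add: coeff_eq_0\<close>)
    qed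
  qed auto
  finally show ?thesis by simp
qed

lemma linear_power_degree_coeff:
  fixes a b :: "'a::comm_semiring_1"
  shows "degree ([:a, b:] ^ n) \<le> n \<and> coeff ([:a, b:] ^ n) n = b ^ n"
proof (induction n)
  case (Suc n)
  have d1: "degree [:a, b:] \<le> 1" by simp
  have "degree ([:a, b:] ^ Suc n) \<le> Suc n"
    using degree_power_le[of "[:a, b:]" "Suc n"] mult_le_mono1[OF d1, of "Suc n"] by simp
  moreover have "coeff ([:a, b:] ^ Suc n) (1 + n) = b * b ^ n"
    using coeff_mult_degree_bounds[of "[:a, b:]" 1 "[:a, b:] ^ n" n] Suc by simp
  ultimately show ?case by simp
qed simp

lemma linear_powers_product_degree_coeff:
  fixes a a' b b' c c' :: "'a::comm_semiring_1" and i j k :: nat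
  defines "p \<equiv> [:a, a':] ^ i * [:b, b':] ^ j * [:c, c':] ^ k"
  shows "degree p \<le> i + j + k" "coeff p (i + j + k) = a' ^ i * b' ^ j * c' ^ k"
proof -
  have d: "degree ([:a, a':] ^ i * [:b, b':] ^ j) \<le> i + j"
    using linear_power_degree_coeff[of a a' i] linear_power_degree_coeff[of b b' j]
      degree_mult_le[of "[:a, a':] ^ i" "[:b, b':] ^ j"] by linarith
  then show "degree p \<le> i + j + k"
    using linear_power_degree_coeff[of c c' k] degree_mult_le[of _ "[:c, c':] ^ k"]
    unfolding p_def by (meson add_mono order_trans)
  show "coeff p (i + j + k) = a' ^ i * b' ^ j * c' ^ k"
    unfolding p_def
    using coeff_mult_degree_bounds[OF d, of "[:c, c':] ^ k" k]
      coeff_mult_degree_bounds[of "[:a, a':] ^ i" i "[:b, b':] ^ j" j]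
      linear_power_degree_coeff[of a a' i] linear_power_degree_coeff[of b b' j]
      linear_power_degree_coeff[of c c' k]
    by simp
qed

lemma quartic_eval_line_poly:
  obtains h where "degree h \<le> 4" "coeff h 4 = quartic_eval Q v"
    "\<And>t. quartic_eval Q (lin_comb 1 u t v) = poly h t"
proof -
  obtain u1 u2 u3 where u: "u = (u1, u2, u3)" by (cases u)
  obtain v1 v2 v3 where v: "v = (v1, v2, v3)" by (cases v)
  define h where "h = (\<Sum>a\<le>4. \<Sum>b\<le>4 - a.
      smult (Q a b) ([:u1, v1:] ^ a * [:u2, v2:] ^ b * [:u3, v3:] ^ (4 - a - b)))"
  have "degree h \<le> 4" unfolding h_def
    by (intro degree_sum_le) (auto intro!: order.trans[OF degree_smult_le]
        order.trans[OF linear_powers_product_degree_coeff(1)])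
  moreover have "coeff h 4 = (\<Sum>a\<le>4. \<Sum>b\<le>4 - a. Q a b * (v1 ^ a * v2 ^ b * v3 ^ (4 - a - b)))"
  proof -
    have "coeff ([:u1, v1:] ^ a * [:u2, v2:] ^ b * [:u3, v3:] ^ (4 - a - b)) 4
        = v1 ^ a * v2 ^ b * v3 ^ (4 - a - b)" if "a + b \<le> 4" for a b
      using linear_powers_product_degree_coeff(2)[where i = a and j = b and k = "4 - a - b"
          and a' = v1 and b' = v2 and c' = v3] that by simp
    then show ?thesis
      unfolding h_def coeff_sum coeff_smult by (intro sum.cong refl) auto
  qed
  then have "coeff h 4 = quartic_eval Q v"
    by (simp add: quartic_eval_def v mult.assoc)
  moreover have "quartic_eval Q (lin_comb 1 u t v) = poly h t" for t
    unfolding h_def quartic_eval_def poly_sum u v lin_comb_def by (simp add: mult.assoc)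
  ultimately show ?thesis using that by blast
qed

definition vanishes_on_line :: "(pt \<Rightarrow> complex) \<Rightarrow> pt \<Rightarrow> bool" where
  "vanishes_on_line F l \<longleftrightarrow> (\<forall>p. on_line p l \<longrightarrow> F p = 0)"

lemma line_point_param:
  assumes "cross3 u v \<noteq> (0, 0, 0)" "det3 u v q = 0"
    and "cross3 q u \<noteq> (0, 0, 0)" "cross3 q v \<noteq> (0, 0, 0)"
  obtains a t where "a \<noteq> 0" "t \<noteq> 0" "q = smult3 a (lin_comb 1 u t v)"
proof -
  obtain \<alpha> \<beta> where q: "q = lin_comb \<alpha> u \<beta> v"
    using lin_comb_if_det3_eq_0[OF assms(1,2)] .
  have "\<alpha> \<noteq> 0" using assms(4) by (auto simp: q cross3_lin_comb_left smult3_eq_zero_iff)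
  moreover have "\<beta> \<noteq> 0" using assms(3) by (auto simp: q cross3_lin_comb_right smult3_eq_zero_iff)
  ultimately show ?thesis using that[of \<alpha> "\<beta> / \<alpha>"] q lin_comb_normalize[of \<alpha> u \<beta> v] by simp
qed

text \<open>Restricted to the line through \<open>u\<close> and \<open>v\<close>, the form is a polynomial of degree at most 4
  in \<open>t\<close>; its zero at \<open>v\<close> kills the top coefficient, so its four roots \<open>0, a, b, c\<close> make it
  vanish.\<close>
lemma quartic_eval_zero_on_span_if_five_zeros:
  assumes u0: "quartic_eval Q u = 0" and v0: "quartic_eval Q v = 0"
    and distinct: "distinct [0, a, b, c]"
    and zeros: "\<And>s. s \<in> {a, b, c} \<Longrightarrow> quartic_eval Q (lin_comb 1 u s v) = 0"
  shows "quartic_eval Q (lin_comb \<alpha> u \<beta> v) = 0"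
proof -
  obtain h where h: "degree h \<le> 4" "coeff h 4 = quartic_eval Q v"
    "\<And>t. quartic_eval Q (lin_comb 1 u t v) = poly h t"
    using quartic_eval_line_poly[where Q = Q and u = u and v = v] by blast
  have "h = 0"
  proof (rule poly_eqI_degree_lead_coeff[of h 4 0 "{0, a, b, c}"])
    show "card {0, a, b, c} \<ge> 4"
      using distinct_card[OF distinct] by simp
    show "poly h z = poly 0 z" if "z \<in> {0, a, b, c}" for z
      using that zeros u0 h(3)[symmetric] by (auto simp: lin_comb_one_zero)
  qed (use h v0 in simp_all)
  then have line: "quartic_eval Q (lin_comb 1 u t v) = 0" for t
    using h(3) by simp
  show ?thesis
  proof (cases "\<alpha> = 0")
    case True
    then show ?thesis using v0 by (simp add: lin_comb_zero_left quartic_eval_smult3)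
  next
    case False
    then show ?thesis using line by (simp add: lin_comb_normalize[OF False] quartic_eval_smult3)
  qed
qed

lemma vanishes_on_line_if_five_zeros:
  fixes q :: "nat \<Rightarrow> pt"
  assumes l: "l \<noteq> (0, 0, 0)"
    and on: "\<And>k. k < 5 \<Longrightarrow> on_line (q k) l"
    and zero: "\<And>k. k < 5 \<Longrightarrow> quartic_eval Q (q k) = 0"
    and distinct: "\<And>i j. i < 5 \<Longrightarrow> j < 5 \<Longrightarrow> i \<noteq> j \<Longrightarrow> cross3 (q i) (q j) \<noteq> (0, 0, 0)"
  shows "vanishes_on_line (quartic_eval Q) l"
proof -
  define u v where "u = q 0" and "v = q 1"
  have uv: "cross3 u v \<noteq> (0, 0, 0)" using distinct[of 0 1] by (simp add: u_def v_def)
  have span: "det3 u v r = 0" if "on_line r l" for r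
    using det3_eq_0_if_on_line[OF l on[of 0] on[of 1] that] by (simp add: u_def v_def)
  have param: "\<forall>k\<in>{2, 3, 4}. \<exists>t. t \<noteq> 0 \<and> quartic_eval Q (lin_comb 1 u t v) = 0 \<and>
      (\<exists>a. q k = smult3 a (lin_comb 1 u t v))"
  proof
    fix k :: nat assume "k \<in> {2, 3, 4}"
    then have k: "k < 5" "k \<noteq> 0" "k \<noteq> 1" by auto
    have "cross3 (q k) u \<noteq> (0, 0, 0)" "cross3 (q k) v \<noteq> (0, 0, 0)"
      using distinct[of k 0] distinct[of k 1] k by (simp_all add: u_def v_def)
    then obtain a t where a: "a \<noteq> 0" "t \<noteq> 0" and qk: "q k = smult3 a (lin_comb 1 u t v)"
      by (rule line_point_param[OF uv span[OF on[OF k(1)]]])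
    have "quartic_eval Q (lin_comb 1 u t v) = 0"
      using zero[OF k(1)] a(1) by (simp add: qk quartic_eval_smult3)
    then show "\<exists>t. t \<noteq> 0 \<and> quartic_eval Q (lin_comb 1 u t v) = 0 \<and>
        (\<exists>a. q k = smult3 a (lin_comb 1 u t v))"
      using a qk by blast
  qed
  obtain t where t: "\<forall>k\<in>{2, 3, 4}. t k \<noteq> 0 \<and> quartic_eval Q (lin_comb 1 u (t k) v) = 0 \<and>
      (\<exists>a. q k = smult3 a (lin_comb 1 u (t k) v))"
    using bchoice[OF param] by blast
  have t_inj: "t i \<noteq> t j" if "i \<in> {2, 3, 4}" "j \<in> {2, 3, 4}" "i \<noteq> j" for i j
  proof
    assume "t i = t j"
    then have "cross3 (q i) (q j) = (0, 0, 0)"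
      using that(1,2) t by (auto simp: cross3_smult3 cross3_lin_comb_lin_comb smult3_eq_zero_iff)
    then show False using distinct that by auto
  qed
  have "quartic_eval Q (lin_comb \<alpha> u \<beta> v) = 0" for \<alpha> \<beta>
  proof (rule quartic_eval_zero_on_span_if_five_zeros[where a = "t 2" and b = "t 3" and c = "t 4"])
    show "distinct [0, t 2, t 3, t 4]"
      using t t_inj[of 2 3] t_inj[of 2 4] t_inj[of 3 4] by auto
  qed (use zero[of 0] zero[of 1] t in \<open>auto simp: u_def v_def\<close>)
  then show ?thesis
    using lin_comb_if_det3_eq_0[OF uv span] unfolding vanishes_on_line_def by metis
qed

lemma vanishes_on_line_if_zero_at_five_meets:
  fixes m :: "nat \<Rightarrow> pt"
  assumes det: "\<And>i j. i < 5 \<Longrightarrow> j < 5 \<Longrightarrow> i \<noteq> j \<Longrightarrow> det3 l (m i) (m j) \<noteq> 0"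
    and zero: "\<And>k. k < 5 \<Longrightarrow> quartic_eval Q (cross3 l (m k)) = 0"
  shows "vanishes_on_line (quartic_eval Q) l"
proof (rule vanishes_on_line_if_five_zeros[where q = "\<lambda>k. cross3 l (m k)"])
  show l: "l \<noteq> (0, 0, 0)" using det[of 0 1] by (auto simp: det3_zero_left)
  show "cross3 (cross3 l (m i)) (cross3 l (m j)) \<noteq> (0, 0, 0)"
    if "i < 5" "j < 5" "i \<noteq> j" for i j
    using det[OF that] l by (simp add: cross3_cross3_common_left smult3_eq_zero_iff)
qed (simp_all add: on_line_cross3_left zero)

definition triple_poly :: "pt \<Rightarrow> complex poly" where
  "triple_poly w = [:fst w, fst (snd w), snd (snd w):]"

lemma triple_poly_eq_0_iff: "triple_poly w = 0 \<longleftrightarrow> w = (0, 0, 0)"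
  by (cases w) (auto simp: triple_poly_def)

lemma det3_cross3_eq_poly:
  "det3 (cross3 p (1, s, s ^ 2)) a b = poly (triple_poly (cross3 (cross3 a b) p)) s"
  by (cases p; cases a; cases b)
    (simp add: triple_poly_def det3_def dot3_def cross3_def algebra_simps power2_eq_square)

lemma cross3_cross3_nonzero_if_not_on_line:
  assumes "cross3 l m \<noteq> (0, 0, 0)" "\<not> on_line p l"
  shows "cross3 (cross3 l m) p \<noteq> (0, 0, 0)"
proof
  assume "cross3 (cross3 l m) p = (0, 0, 0)"
  then obtain c where "p = smult3 c (cross3 l m)"
    using cross3_eq_zero_imp_smult3 assms(1) by blast
  then show False
    using assms(2) by (simp add: on_line_def dot3_smult3_right dot3_cross3_left)
qed

text \<open>The lines through \<open>p\<close> are parametrised as \<open>p \<times> (1, s, s\<^sup>2)\<close>; each pairwise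
  intersection point excludes only the roots of a nonzero quadratic in \<open>s\<close>.\<close>
lemma exists_line_through_avoiding_meets:
  fixes l :: "'i \<Rightarrow> pt"
  assumes "finite I"
    and distinct: "\<And>i j. i \<in> I \<Longrightarrow> j \<in> I \<Longrightarrow> i \<noteq> j \<Longrightarrow> cross3 (l i) (l j) \<noteq> (0, 0, 0)"
    and off: "\<And>i. i \<in> I \<Longrightarrow> \<not> on_line p (l i)"
  obtains M where "on_line p M"
    "\<And>i j. i \<in> I \<Longrightarrow> j \<in> I \<Longrightarrow> i \<noteq> j \<Longrightarrow> det3 M (l i) (l j) \<noteq> 0"
proof -
  define W where "W = {cross3 (cross3 (l i) (l j)) p | i j. i \<in> I \<and> j \<in> I \<and> i \<noteq> j}"
  have "W \<subseteq> (\<lambda>(i, j). cross3 (cross3 (l i) (l j)) p) ` (I \<times> I)"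
    unfolding W_def by auto
  then have "finite W" using assms(1) finite_subset by blast
  moreover have "triple_poly w \<noteq> 0" if w: "w \<in> W" for w
  proof -
    obtain i j where "i \<in> I" "j \<in> I" "i \<noteq> j" "w = cross3 (cross3 (l i) (l j)) p"
      using w unfolding W_def by blast
    then show ?thesis
      using cross3_cross3_nonzero_if_not_on_line[OF distinct off]
      by (simp add: triple_poly_eq_0_iff)
  qed
  ultimately have "finite (\<Union>w\<in>W. {s. poly (triple_poly w) s = 0})"
    using poly_roots_finite by blast
  then obtain s where s: "s \<notin> (\<Union>w\<in>W. {s. poly (triple_poly w) s = 0})"
    using ex_new_if_finite[OF infinite_UNIV_char_0] by blast
  show ?thesis
  proof (rule that[of "cross3 p (1, s, s ^ 2)"])
    show "on_line p (cross3 p (1, s, s ^ 2))"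
      by (simp add: on_line_def dot3_commute dot3_cross3_left)
    show "det3 (cross3 p (1, s, s ^ 2)) (l i) (l j) \<noteq> 0"
      if "i \<in> I" "j \<in> I" "i \<noteq> j" for i j
      using s that unfolding det3_cross3_eq_poly W_def by blast
  qed
qed

lemma quartic_zero_if_vanishes_on_five_lines:
  fixes l :: "nat \<Rightarrow> pt"
  assumes distinct: "\<And>i j. i < 5 \<Longrightarrow> j < 5 \<Longrightarrow> i \<noteq> j \<Longrightarrow> cross3 (l i) (l j) \<noteq> (0, 0, 0)"
    and vanish: "\<And>i. i < 5 \<Longrightarrow> vanishes_on_line (quartic_eval Q) (l i)"
  shows "quartic_eval Q p = 0"
proof (cases "\<exists>i<5. on_line p (l i)")
  case True
  then show ?thesis using vanish unfolding vanishes_on_line_def by blast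
next
  case False
  then obtain M where M: "on_line p M"
    "\<And>i j. i \<in> {..<5} \<Longrightarrow> j \<in> {..<5} \<Longrightarrow> i \<noteq> j \<Longrightarrow> det3 M (l i) (l j) \<noteq> 0"
    using exists_line_through_avoiding_meets[of "{..<5::nat}" l p] distinct by blast
  have "vanishes_on_line (quartic_eval Q) M"
  proof (rule vanishes_on_line_if_zero_at_five_meets[where m = l])
    show "quartic_eval Q (cross3 M (l k)) = 0" if "k < 5" for k
      using vanish[OF that] on_line_cross3_right unfolding vanishes_on_line_def by blast
  qed (use M(2) in auto)
  then show ?thesis using M(1) unfolding vanishes_on_line_def by blast
qed

lemma cross3_nonzero_if_det3_nonzero: "det3 a b c \<noteq> 0 \<Longrightarrow> cross3 a b \<noteq> (0, 0, 0)"
  by (cases c) (auto simp: det3_eq_dot3_cross3 dot3_def)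

lemma heptagon_det3_nonzero:
  "heptagon L \<Longrightarrow> i < 7 \<Longrightarrow> j < 7 \<Longrightarrow> k < 7 \<Longrightarrow> distinct [i, j, k] \<Longrightarrow>
    det3 (L i) (L j) (L k) \<noteq> 0"
  by (simp add: heptagon_def)

lemma adjoint_pointI: "nonconsec7 i j \<Longrightarrow> cross3 (L i) (L j) \<in> adjoint_points L"
  by (auto simp: adjoint_points_def meet_def)

lemma nonconsec7_cases:
  assumes "nonconsec7 i j"
  shows "j = (i + 2) mod 7 \<or> j = (i + 3) mod 7 \<or> i = (j + 2) mod 7 \<or> i = (j + 3) mod 7"
proof -
  have "n = 0 \<or> n = 1 \<or> n = 2 \<or> n = 3 \<or> n = 4 \<or> n = 5 \<or> n = 6" if "n < 7" for n :: nat
    using that by linarith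
  then have "i = 0 \<or> i = 1 \<or> i = 2 \<or> i = 3 \<or> i = 4 \<or> i = 5 \<or> i = 6"
    "j = 0 \<or> j = 1 \<or> j = 2 \<or> j = 3 \<or> j = 4 \<or> j = 5 \<or> j = 6"
    using assms by (simp_all add: nonconsec7_def)
  then show ?thesis using assms by (elim disjE) (simp_all add: nonconsec7_def)
qed

lemma quartic_zero_if_vanishes_on_adjoint_points_and_line:
  assumes hept: "heptagon L"
    and adjoint: "\<And>q. q \<in> adjoint_points L \<Longrightarrow> quartic_eval Q q = 0"
    and line0: "vanishes_on_line (quartic_eval Q) (L 0)"
  shows "quartic_eval Q p = 0"
proof -
  let ?F = "quartic_eval Q"
  have next_line: "vanishes_on_line ?F (L i)"
    if sub: "set (i # xs) \<subseteq> {..<7}" and dist: "distinct (i # xs)" and len: "length xs = 5"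
      and known: "list_all (\<lambda>a. nonconsec7 i a \<or> vanishes_on_line ?F (L a)) xs" for i xs
  proof (rule vanishes_on_line_if_zero_at_five_meets[where m = "\<lambda>k. L (xs ! k)"])
    have mem: "xs ! k \<in> set xs" if "k < 5" for k using that len by simp
    show "det3 (L i) (L (xs ! a)) (L (xs ! b)) \<noteq> 0" if "a < 5" "b < 5" "a \<noteq> b" for a b
    proof (rule heptagon_det3_nonzero[OF hept])
      show "i < 7" "xs ! a < 7" "xs ! b < 7" using sub mem that by auto
      show "distinct [i, xs ! a, xs ! b]"
        using dist mem that len by (auto simp: nth_eq_iff_index_eq)
    qed
    show "?F (cross3 (L i) (L (xs ! k))) = 0" if "k < 5" for k
      using bspec[OF known[unfolded list_all_iff] mem[OF that]]
    proof
      assume "nonconsec7 i (xs ! k)"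
      then show ?thesis by (rule adjoint[OF adjoint_pointI])
    next
      assume "vanishes_on_line ?F (L (xs ! k))"
      then show ?thesis using on_line_cross3_right unfolding vanishes_on_line_def by blast
    qed
  qed
  have line1: "vanishes_on_line ?F (L 1)"
    by (rule next_line[of 1 "[0, 3, 4, 5, 6]"])
      (simp_all add: nonconsec7_def line0 flip: One_nat_def)
  have line2: "vanishes_on_line ?F (L 2)"
    by (rule next_line[of 2 "[0, 1, 4, 5, 6]"])
      (simp_all add: nonconsec7_def line0 line1 flip: One_nat_def)
  have line3: "vanishes_on_line ?F (L 3)"
    by (rule next_line[of 3 "[0, 1, 2, 5, 6]"])
      (simp_all add: nonconsec7_def line0 line1 line2 flip: One_nat_def)
  have line4: "vanishes_on_line ?F (L 4)"
    by (rule next_line[of 4 "[0, 1, 2, 3, 6]"])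
      (simp_all add: nonconsec7_def line0 line1 line2 line3 flip: One_nat_def)
  show ?thesis
  proof (rule quartic_zero_if_vanishes_on_five_lines[where l = L])
    show "cross3 (L i) (L j) \<noteq> (0, 0, 0)" if "i < 5" "j < 5" "i \<noteq> j" for i j
      by (rule cross3_nonzero_if_det3_nonzero[OF heptagon_det3_nonzero[OF hept, of i j 5]])
        (use that in auto)
    show "vanishes_on_line ?F (L i)" if "i < 5" for i
      using that line0 line1 line2 line3 line4 by (auto simp: less_Suc_eq numeral_eq_Suc)
  qed
qed

lemma quartic_eval_origin: "quartic_eval Q (0, 0, 0) = 0"
  using quartic_eval_smult3[of Q 0 "(0, 0, 0)"] by (simp add: smult3_def)

lemma cross3_nonzero_if_quartic_separates:
  assumes "quartic_eval Q x \<noteq> 0" "quartic_eval Q y = 0" "y \<noteq> (0, 0, 0)"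
  shows "cross3 x y \<noteq> (0, 0, 0)"
proof
  assume "cross3 x y = (0, 0, 0)"
  moreover have "x \<noteq> (0, 0, 0)" using assms(1) quartic_eval_origin by auto
  ultimately obtain c where "y = smult3 c x" using cross3_eq_zero_imp_smult3 by blast
  then show False using assms by (auto simp: quartic_eval_smult3 smult3_eq_zero_iff)
qed

lemma vanishes_on_line0_if_zero_at_extra_point:
  assumes hept: "heptagon L" and x: "on_line x (L 0)" "quartic_eval Q x \<noteq> 0"
    and Q: "\<And>r. r \<in> adjoint_points L \<Longrightarrow> quartic_eval Q r = 0"
    and H: "quartic_eval H x = 0" "\<And>r. r \<in> adjoint_points L \<Longrightarrow> quartic_eval H r = 0"
  shows "vanishes_on_line (quartic_eval H) (L 0)"
proof -
  define q where "q k = (if k = 0 then x else cross3 (L 0) (L (k + 1)))" for k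
  have q_adjoint: "q k \<in> adjoint_points L" if "k < 5" "k \<noteq> 0" for k
    using that by (auto simp: q_def nonconsec7_def intro: adjoint_pointI)
  have q_nonzero: "q k \<noteq> (0, 0, 0)" if "k < 5" "k \<noteq> 0" for k
    using that heptagon_det3_nonzero[OF hept, of 0 "k + 1" 6]
    by (simp add: q_def cross3_nonzero_if_det3_nonzero)
  have x_separated: "cross3 x (q k) \<noteq> (0, 0, 0)" if "k < 5" "k \<noteq> 0" for k
    by (rule cross3_nonzero_if_quartic_separates[OF x(2) Q[OF q_adjoint] q_nonzero])
      (use that in simp_all)
  show ?thesis
  proof (rule vanishes_on_line_if_five_zeros[where q = q])
    show "L 0 \<noteq> (0, 0, 0)"
      using hept by (simp add: heptagon_def nz_def)
    show "on_line (q k) (L 0)" for k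
      using x(1) by (simp add: q_def on_line_cross3_left)
    show "quartic_eval H (q k) = 0" if "k < 5" for k
      using H q_adjoint[OF that] by (cases "k = 0") (simp_all add: q_def)
    show "cross3 (q i) (q j) \<noteq> (0, 0, 0)" if "i < 5" "j < 5" "i \<noteq> j" for i j
    proof (cases "i = 0 \<or> j = 0")
      case True
      have "cross3 (q j) (q i) = smult3 (-1) (cross3 (q i) (q j))" by (rule cross3_commute)
      then show ?thesis
        using True that x_separated[of i] x_separated[of j] by (auto simp: q_def smult3_eq_zero_iff)
    next
      case False
      then show ?thesis
        using that heptagon_det3_nonzero[OF hept, of 0 "i + 1" "j + 1"] hept
        by (auto simp: q_def cross3_cross3_common_left smult3_eq_zero_iff heptagon_def nz_def)
    qed
  qed
qed

lemma is_adjoint_if_nonzero_quartic_through_adjoint_points: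
  assumes hept: "heptagon L" and F: "is_quartic_form F"
    and adjoint: "\<forall>q\<in>adjoint_points L. F q = 0" and "F p \<noteq> 0"
  shows "is_adjoint L F"
proof -
  obtain QF where QF: "F = quartic_eval QF" using F by (auto simp: is_quartic_form_def)
  obtain x where x: "on_line x (L 0)" "F x \<noteq> 0"
    using quartic_zero_if_vanishes_on_adjoint_points_and_line[OF hept, of QF p] adjoint \<open>F p \<noteq> 0\<close>
    unfolding vanishes_on_line_def QF by blast
  have "\<exists>c. G = (\<lambda>p. c * F p)"
    if G: "is_quartic_form G" and G0: "\<forall>q\<in>adjoint_points L. G q = 0" for G
  proof -
    obtain QG where QG: "G = quartic_eval QG" using G by (auto simp: is_quartic_form_def)
    define c where "c = G x / F x"
    define QH where "QH = (\<lambda>a b. QG a b - c * QF a b)"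
    have H: "quartic_eval QH r = G r - c * F r" for r
      by (simp add: QH_def QF QG quartic_eval_diff)
    have H_adjoint: "quartic_eval QH r = 0" if "r \<in> adjoint_points L" for r
      using that G0 adjoint by (simp add: H)
    have "vanishes_on_line (quartic_eval QH) (L 0)"
      by (rule vanishes_on_line0_if_zero_at_extra_point[OF hept x(1), of QF])
        (use x(2) adjoint H_adjoint in \<open>simp_all add: QF H c_def\<close>)
    then have "quartic_eval QH r = 0" for r
      using quartic_zero_if_vanishes_on_adjoint_points_and_line[OF hept H_adjoint] by blast
    then show ?thesis using H by (auto intro!: exI[of _ c])
  qed
  then show ?thesis using F adjoint by (simp add: is_adjoint_def)
qed

definition klein_coeffs :: "nat \<Rightarrow> nat \<Rightarrow> complex" where
  "klein_coeffs a b = (if (a, b) \<in> {(3, 1), (0, 3), (1, 0)} then 1 else 0)"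

lemma klein_eq_quartic_eval: "klein = quartic_eval klein_coeffs"
proof
  fix p :: pt
  show "klein p = quartic_eval klein_coeffs p"
    by (cases p) (simp add: klein_def quartic_eval_def klein_coeffs_def atMost_nat_numeral)
qed

lemma is_quartic_form_klein: "is_quartic_form klein"
  unfolding is_quartic_form_def klein_eq_quartic_eval
  by (intro exI[of _ klein_coeffs] conjI exI[of _ "3::nat"] exI[of _ "1::nat"])
    (simp_all add: klein_coeffs_def)

lemma klein_smult3: "klein (smult3 c p) = c ^ 4 * klein p"
  by (simp add: klein_eq_quartic_eval quartic_eval_smult3)

lemma klein_cross3_commute: "klein (cross3 b a) = klein (cross3 a b)"
  by (simp add: cross3_commute[of b a] klein_smult3)

lemma klein_cross3_eq_0_if_common_point:
  assumes "on_klein q" "on_line q A" "on_line q B"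
  shows "klein (cross3 A B) = 0"
proof -
  obtain c where "cross3 A B = smult3 c q"
    using cross3_eq_smult3_if_on_lines[OF assms(2,3)] assms(1)
    unfolding on_klein_def nz_def by blast
  then show ?thesis using assms(1) by (simp add: klein_smult3 on_klein_def)
qed

lemma klein_phi: "\<zeta> ^ 7 = 1 \<Longrightarrow> klein (phi \<zeta> p) = klein p"
proof -
  assume z: "\<zeta> ^ 7 = 1"
  obtain x y w where p: "p = (x, y, w)" by (cases p)
  have "klein (phi \<zeta> p) = (\<zeta> ^ 7) ^ 2 * (x ^ 3 * y) + \<zeta> ^ 7 * (y ^ 3 * w) + \<zeta> ^ 7 * (w ^ 3 * x)"
    unfolding p klein_def phi_def by simp algebra
  then show ?thesis using z by (simp add: p klein_def)
qed

lemma power_mod_if_power_eq_1: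
  fixes x :: "'a::monoid_mult"
  assumes "x ^ n = 1"
  shows "x ^ (k mod n) = x ^ k"
proof -
  have "x ^ k = (x ^ n) ^ (k div n) * x ^ (k mod n)"
    by (simp flip: power_mult power_add)
  then show ?thesis using assms by simp
qed

lemma funpow_phi_mod_7:
  assumes "\<zeta> ^ 7 = 1"
  shows "(phi \<zeta> ^^ (k mod 7)) p = (phi \<zeta> ^^ k) p"
proof -
  have funpow_phi: "(phi \<zeta> ^^ n) (x, y, z) = ((\<zeta> ^ n) ^ 4 * x, (\<zeta> ^ n) ^ 2 * y, \<zeta> ^ n * z)"
    for n x y z
    by (induction n) (simp_all add: phi_def power_mult_distrib mult_ac)
  show ?thesis by (cases p) (simp add: funpow_phi power_mod_if_power_eq_1[OF assms])
qed

text \<open>The action of \<open>\<phi>\<close> on line coordinates: the cofactor matrix of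
  \<open>diag(\<zeta>\<^sup>4, \<zeta>\<^sup>2, \<zeta>)\<close>.\<close>
definition phi_dual :: "complex \<Rightarrow> pt \<Rightarrow> pt" where
  "phi_dual \<zeta> w = (case w of (a, b, c) \<Rightarrow> (\<zeta> ^ 3 * a, \<zeta> ^ 5 * b, \<zeta> ^ 6 * c))"

lemma cross3_phi: "cross3 (phi \<zeta> a) (phi \<zeta> b) = phi_dual \<zeta> (cross3 a b)"
  by (induct a rule: prod_induct3; induct b rule: prod_induct3)
    (simp add: phi_def phi_dual_def cross3_def, (intro conjI)?; algebra)

lemma cross3_phi_dual:
  assumes "\<zeta> ^ 7 = 1"
  shows "cross3 (phi_dual \<zeta> a) (phi_dual \<zeta> b) = phi \<zeta> (cross3 a b)"
proof -
  have "\<zeta> ^ 11 = \<zeta> ^ 4" "\<zeta> ^ 9 = \<zeta> ^ 2" "\<zeta> ^ 8 = \<zeta>"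
    using power_mod_if_power_eq_1[OF assms, of 11] power_mod_if_power_eq_1[OF assms, of 9]
      power_mod_if_power_eq_1[OF assms, of 8]
    by simp_all
  moreover have "cross3 (phi_dual \<zeta> a) (phi_dual \<zeta> b) =
      (case cross3 a b of (x, y, z) \<Rightarrow> (\<zeta> ^ 11 * x, \<zeta> ^ 9 * y, \<zeta> ^ 8 * z))"
    by (induct a rule: prod_induct3; induct b rule: prod_induct3)
      (simp add: phi_dual_def cross3_def, (intro conjI)?; algebra)
  ultimately show ?thesis by (simp add: phi_def)
qed

lemma klein_cross3_phi_dual:
  "\<zeta> ^ 7 = 1 \<Longrightarrow> klein (cross3 (phi_dual \<zeta> A) (phi_dual \<zeta> B)) = klein (cross3 A B)"
  by (simp add: cross3_phi_dual klein_phi)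

lemma klein_vanishes_at_adjoint_points:
  fixes \<zeta> :: complex and P L :: "nat \<Rightarrow> pt"
  assumes zeta: "\<zeta> ^ 7 = 1" and p1: "klein p1 = 0"
    and P: "\<And>k. P k = (phi \<zeta> ^^ k) p1"
    and L: "\<And>i. i < 7 \<Longrightarrow> L i = cross3 (P (i + 5)) (P i)"
    and meet: "\<exists>q. on_klein q \<and> on_line q (L 2) \<and> on_line q (L 6)"
  shows "\<forall>q\<in>adjoint_points L. klein q = 0"
proof -
  have P_cong: "P m = P n" if "m mod 7 = n mod 7" for m n
    using that funpow_phi_mod_7[OF zeta] by (metis P)
  have P_Suc: "P (Suc k) = phi \<zeta> (P k)" for k by (simp add: P)
  have P_on: "klein (P k) = 0" for k
    by (induction k) (simp_all add: P_Suc P p1 klein_phi[OF zeta])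
  have L_Suc: "L (Suc i mod 7) = phi_dual \<zeta> (L i)" if "i < 7" for i
  proof -
    have "L (Suc i mod 7) = cross3 (P (Suc (i + 5))) (P (Suc i))"
      using L[of "Suc i mod 7"] P_cong[of "Suc i mod 7 + 5" "Suc (i + 5)"]
        P_cong[of "Suc i mod 7" "Suc i"] by (simp add: mod_simps)
    then show ?thesis by (simp only: P_Suc L[OF that] cross3_phi)
  qed
  have shift: "klein (cross3 (L ((a + k) mod 7)) (L ((b + k) mod 7))) = klein (cross3 (L a) (L b))"
    if "a < 7" "b < 7" for a b k
  proof (induction k)
    case (Suc k)
    have "(a + Suc k) mod 7 = Suc ((a + k) mod 7) mod 7"
      "(b + Suc k) mod 7 = Suc ((b + k) mod 7) mod 7"
      by (simp_all add: mod_Suc_eq)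
    then show ?case using Suc by (simp add: L_Suc klein_cross3_phi_dual[OF zeta])
  qed (use that in simp)
  have meet2: "klein (cross3 (L i) (L ((i + 2) mod 7))) = 0" if "i < 7" for i
  proof -
    have "L ((i + 2) mod 7) = cross3 (P i) (P (i + 2))"
      using L[of "(i + 2) mod 7"] P_cong[of "(i + 2) mod 7 + 5" i]
        P_cong[of "(i + 2) mod 7" "i + 2"]
      by (simp add: mod_simps)
    then show ?thesis
      using that by (simp add: L cross3_cross3_common_middle klein_smult3 P_on)
  qed
  have meet3: "klein (cross3 (L i) (L ((i + 3) mod 7))) = 0" if "i < 7" for i
  proof -
    have "klein (cross3 (L 6) (L 2)) = 0"
      using meet klein_cross3_eq_0_if_common_point by blast
    then show ?thesis
      using shift[of 6 2 "i + 1"] that by (simp add: mod_simps add.commute)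
  qed
  have "klein (cross3 (L i) (L j)) = 0" if nc: "nonconsec7 i j" for i j
  proof -
    have ij: "i < 7" "j < 7" using nc by (simp_all add: nonconsec7_def)
    consider "j = (i + 2) mod 7" | "j = (i + 3) mod 7" | "i = (j + 2) mod 7" | "i = (j + 3) mod 7"
      using nonconsec7_cases[OF nc] by blast
    then show ?thesis
    proof cases
      case 1
      then show ?thesis using meet2[OF ij(1)] by simp
    next
      case 2
      then show ?thesis using meet3[OF ij(1)] by simp
    next
      case 3
      then show ?thesis using meet2[OF ij(2)] klein_cross3_commute by metis
    next
      case 4
      then show ?thesis using meet3[OF ij(2)] klein_cross3_commute by metis
    qed
  qed
  then show ?thesis by (auto simp: adjoint_points_def meet_def)
qed

theorem lemma5p2:
  fixes \<zeta> :: complex and p1 :: pt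
  assumes zeta: "\<zeta> ^ 7 = 1" "\<zeta> \<noteq> 1"
    and p1C: "on_klein p1"
    and p1e: "\<not> proj_eq p1 e1" "\<not> proj_eq p1 e2" "\<not> proj_eq p1 e3"
  defines "P \<equiv> (\<lambda>k::nat. (phi \<zeta> ^^ k) p1)"
  defines "L \<equiv> (\<lambda>i. [line_through (P 5) (P 0), line_through (P 6) (P 1),
                      line_through (P 0) (P 2), line_through (P 1) (P 3),
                      line_through (P 2) (P 4), line_through (P 3) (P 5),
                      line_through (P 4) (P 6)] ! i)"
  assumes meetC: "\<exists>q. on_klein q \<and> on_line q (line_through (P 0) (P 2))
                              \<and> on_line q (line_through (P 4) (P 6))"
    and hept: "heptagon L"
  shows "is_adjoint L klein"
proof (rule is_adjoint_if_nonzero_quartic_through_adjoint_points[OF hept is_quartic_form_klein])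
  have P_mod: "P (k mod 7) = P k" for k
    by (simp add: P_def funpow_phi_mod_7[OF zeta(1)])
  have "L i = cross3 (P (i + 5)) (P i)" if "i < 7" for i
  proof -
    have "i = 0 \<or> i = 1 \<or> i = 2 \<or> i = 3 \<or> i = 4 \<or> i = 5 \<or> i = 6" using that by linarith
    then show ?thesis using P_mod[of 7] P_mod[of 8] P_mod[of 9] P_mod[of 10] P_mod[of 11]
      by (elim disjE) (simp_all add: L_def line_through_def)
  qed
  moreover have "\<exists>q. on_klein q \<and> on_line q (L 2) \<and> on_line q (L 6)"
    using meetC by (simp add: L_def)
  ultimately show "\<forall>q\<in>adjoint_points L. klein q = 0"
    using klein_vanishes_at_adjoint_points[OF zeta(1), of p1 P L] p1C
    unfolding on_klein_def P_def by blast
  show "klein (1, 1, 1) \<noteq> 0" by (simp add: klein_def)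
qed

end
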